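(* Let $\epsilon\in(0,1)$, let $K\ge1$, and let $T\ge2$ be an integer. Let $\bar A=[\bar a,\bar b)\times[0,\infty)$ with integers $\bar a<\bar b$. Let $\bar{\mathcal{W}}$ be a finite set of rows of an RCP instance such that every row $W\in\bar{\mathcal{W}}$ spans $\bar A$, i.e., there exist $R,R'\in W$ with $\mathrm{left}(R)\le\bar a$ and $\mathrm{right}(R')\ge\bar b$. For a real $c'>0$ and an integer $p'$, let $\bar{\mathcal{W}}^{c',p'}$ be the set of rows $W\in\bar{\mathcal{W}}$ whose leftmost rectangle $R$ satisfies $c(R)=c'$ and $(1+\epsilon)^{p'}\le p(R)<(1+\epsilon)^{p'+1}$. Let $\mathcal{G}$ be any set of pairs $(c',p')$ containing every pair with $\bar{\mathcal{W}}^{c',p'}\neq\emptyset$. Let $\bar S\subseteq\bigcup_{W\in\bar{\mathcal{W}}}W$ contain a prefix of each row $W\in\bar{\mathcal W}$ (if $R\in\bar S\cap W$ then every $R'\in W$ with $\mathrm{right}(R')\le\mathrm{left}(R)$ is in $\bar S$), and let $\bar n^{c',p'}:=|\{W\in\bar{\mathcal{W}}^{c',p'}:W\cap\bar S\ne\emptyset\}|$. Then there exists a step function $\bar f:\bar A\to\{0,1,\dots,\sum_{R}p(R)\}$ with $O((K|\mathcal{G}|\log T/\epsilon)^2)$ steps such that for all integers $t,s$ with $(t,s)\in\bar A$, $$\bar f(t,s)\le\sum_{R\in\bar S:R\cap L(s,t)\ne\emptyset}p(R)\le\bar f(t,s)+\sum_{(c',p')}(1+\epsilon)^{p'}\left\lfloor\frac{\epsilon}{2K\log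 T}\bar n^{c',p'}\right\rfloor,$$ where the last sum ranges over all pairs $(c',p')$ for which some rectangle in some row of $\bar{\mathcal{W}}^{c',p'}$ intersects $L(s,t)$.
   Context: RCP rectangles and rows: each rectangle is $R=[a,b)\times[j,j+1)$ with $a<b$, $a,b,j\in\mathbb{N}_0$, $\mathrm{left}(R)=a$, $\mathrm{right}(R)=b$, cost $c(R)>0$ and value $p(R)>0$; rectangles are pairwise disjoint; the rectangles with the same $j$ form a row, all rectangles of a row have the same value and are consecutive along the $x$-axis (no gaps). The ray $L(s,t)$ for $s,t\in\mathbb{N}_0$ is $\{t\}\times(-\infty,s]$; a rectangle $[a,b)\times[j,j+1)$ intersects $L(s,t)$ iff $a\le t<b$ and $j\le s$. A step function on $\bar A$ with $k$ steps is a function for which there is a partition of $\bar A$ into $k$ axis-parallel rectangles of the form $[x^L,x^R)\times[y^B,y^T)$ (with $x^L,x^R,y^B\in\mathbb{N}_0$, $y^T\in\mathbb{N}_0\cup\{\infty\}$) on each of which the function is constant. The sum $\sum_R p(R)$ in the codomain is over all rectangles of the rows in $\bar{\mathcal W}$. *)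

theory Defs
  imports Complex_Main
begin

text \<open>A rectangle [left, right) x [ypos, ypos+1) with cost and (integer) value.\<close>
record rect =
  left :: nat
  right :: nat
  ypos :: nat
  cost :: real
  val :: nat

definition row_of :: "rect set \<Rightarrow> nat \<Rightarrow> rect set" where
  "row_of I j = {R \<in> I. ypos R = j}"

definition rows :: "rect set \<Rightarrow> rect set set" where
  "rows I = {W. \<exists>j. W = row_of I j \<and> W \<noteq> {}}"

definition rcp_instance :: "rect set \<Rightarrow> bool" where
  "rcp_instance I \<longleftrightarrow> finite I
    \<and> (\<forall>R\<in>I. left R < right R \<and> cost R > 0 \<and> val R > 0)
    \<and> (\<forall>R\<in>I. \<forall>R'\<in>I. R \<noteq> R' \<longrightarrow>
          ypos R \<noteq> ypos R' \<or> right R \<le> left R' \<or> right R' \<le> left R)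
    \<and> (\<forall>W\<in>rows I. \<forall>R\<in>W. \<forall>R'\<in>W. val R = val R')
    \<and> (\<forall>W\<in>rows I. \<forall>x::nat. (\<exists>R\<in>W. left R \<le> x) \<and> (\<exists>R\<in>W. x < right R)
          \<longrightarrow> (\<exists>R\<in>W. left R \<le> x \<and> x < right R))"

text \<open>R intersects the ray L(s,t) = {t} x (-inf, s].\<close>
definition hits_ray :: "rect \<Rightarrow> nat \<Rightarrow> nat \<Rightarrow> bool" where
  "hits_ray R s t \<longleftrightarrow> left R \<le> t \<and> t < right R \<and> ypos R \<le> s"

text \<open>Axis-parallel boxes [xL,xR) x [yB,yT), yT = None meaning infinity.\<close>
type_synonym box = "nat \<times> nat \<times> nat \<times> nat option"

definition in_box :: "nat \<times> nat \<Rightarrow> box \<Rightarrow> bool" where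
  "in_box pt B = (case B of (xL, xR, yB, yT) \<Rightarrow>
      xL \<le> fst pt \<and> fst pt < xR \<and> yB \<le> snd pt
      \<and> (case yT of None \<Rightarrow> True | Some yt \<Rightarrow> snd pt < yt))"

text \<open>f is a step function on [a,b) x [0,inf) with k steps (integer corners, so it
  suffices to consider lattice points).\<close>
definition step_function_on :: "nat \<Rightarrow> nat \<Rightarrow> (nat \<times> nat \<Rightarrow> 'v) \<Rightarrow> nat \<Rightarrow> bool" where
  "step_function_on a b f k \<longleftrightarrow> (\<exists>Bs::box list. length Bs = k
     \<and> (\<forall>B\<in>set Bs. \<forall>pt. in_box pt B \<longrightarrow> a \<le> fst pt \<and> fst pt < b)
     \<and> (\<forall>x y. a \<le> x \<and> x < b \<longrightarrow> (\<exists>!i. i < k \<and> in_box (x, y) (Bs ! i)))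
     \<and> (\<forall>i<k. \<forall>p q. in_box p (Bs ! i) \<longrightarrow> in_box q (Bs ! i) \<longrightarrow> f p = f q))"

definition row_class :: "real \<Rightarrow> rect set set \<Rightarrow> real \<Rightarrow> int \<Rightarrow> rect set set" where
  "row_class eps Ws c' p' = {W \<in> Ws. \<exists>R\<in>W. (\<forall>R'\<in>W. left R \<le> left R')
      \<and> cost R = c' \<and> (1 + eps) powr (real_of_int p') \<le> real (val R)
      \<and> real (val R) < (1 + eps) powr (real_of_int p' + 1)}"

end

theory Submission
  imports Defs
begin

text \<open>
  A row W that meets S contributes to the ray L(s, t) exactly when its height is at most s and
  its prefix W \<inter> S reaches beyond t, and then only with its rectangle over t. So the ray sum
  is a weighted count of the points (prefix_end W S, ypos W) dominating (t, s).
  For every class (c', p') with n rows, choose O(1/\<delta>) values on each axis, \<delta> = eps / (2 K log T),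
  such that every open gap between chosen values contains at most \<lfloor>\<delta> n\<rfloor> / 4 of these
  points. The union over all classes is a grid with O(|G| / \<delta>) lines per axis. On each grid cell,
  take the count at the corner where it is smallest. The rows this misses at (t, s) have a
  coordinate in one of the two gaps next to (t, s), and a row of class (c', p') is worth less than
  2 (1 + eps)^p'. So class (c', p') loses at most (1 + eps)^p' \<lfloor>\<delta> n\<rfloor>.
\<close>

lemma exists_count_threshold:
  fixes e :: "'a \<Rightarrow> 'b::linorder"
  assumes "finite A" and "q < card A"
  shows "\<exists>m. q < card {i\<in>A. e i \<le> m} \<and> card {i\<in>A. e i < m} \<le> q"
proof -
  define V where "V = {v\<in>e ` A. q < card {i\<in>A. e i \<le> v}}"
  have "{i\<in>A. e i \<le> Max (e ` A)} = A"
    using assms(1) by auto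
  moreover have "A \<noteq> {}"
    using assms(2) by auto
  ultimately have "Max (e ` A) \<in> V"
    using assms by (auto simp: V_def)
  then have "V \<noteq> {}" and "finite V"
    using assms(1) by (auto simp: V_def)
  define m where "m = Min V"
  have "m \<in> V"
    unfolding m_def using \<open>finite V\<close> \<open>V \<noteq> {}\<close> by (rule Min_in)
  moreover have "card {i\<in>A. e i < m} \<le> q"
  proof (cases "{i\<in>A. e i < m} = {}")
    case True
    then show ?thesis
      by (simp only: card.empty)
  next
    case False
    define v where "v = Max (e ` {i\<in>A. e i < m})"
    have "v \<in> e ` {i\<in>A. e i < m}"
      unfolding v_def using False assms(1) by (intro Max_in) auto
    then have "v < m" and "v \<in> e ` A"
      by auto
    then have "v \<notin> V"
      using Min_le[OF \<open>finite V\<close>] by (force simp: m_def)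
    moreover have "{i\<in>A. e i < m} = {i\<in>A. e i \<le> v}"
      using \<open>v < m\<close> assms(1) by (auto simp: v_def)
    ultimately show ?thesis
      using \<open>v \<in> e ` A\<close> by (simp add: V_def)
  qed
  ultimately show ?thesis
    by (auto simp: V_def)
qed

lemma exists_sparse_separators:
  fixes e :: "'a \<Rightarrow> 'b::linorder"
  assumes "finite A"
  shows "\<exists>Z. finite Z \<and> card Z \<le> card A div Suc q \<and>
     (\<forall>u v. Z \<inter> {u<..<v} = {} \<longrightarrow> card {i\<in>A. e i \<in> {u<..<v}} \<le> q)"
  using assms
proof (induction "card A" arbitrary: A rule: less_induct)
  case less
  show ?case
  proof (cases "card A \<le> q")
    case True
    then have "card {i\<in>A. e i \<in> {u<..<v}} \<le> q" for u v
      using card_mono[OF less.prems, of "{i\<in>A. e i \<in> {u<..<v}}"] by auto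
    then show ?thesis
      by (intro exI[of _ "{}"]) auto
  next
    case False
    then obtain m where m: "q < card {i\<in>A. e i \<le> m}" "card {i\<in>A. e i < m} \<le> q"
      using exists_count_threshold[of A q e] less.prems by (meson not_le)
    define A' where "A' = {i\<in>A. m < e i}"
    have "card A = card A' + card {i\<in>A. e i \<le> m}"
      using less.prems by (subst card_Un_disjoint[symmetric]) (auto simp: A'_def intro: arg_cong[where f = card])
    then have card_A': "card A' + Suc q \<le> card A"
      using m(1) by linarith
    obtain Z where Z: "finite Z" "card Z \<le> card A' div Suc q"
      and sep: "\<And>u v. Z \<inter> {u<..<v} = {} \<Longrightarrow> card {i\<in>A'. e i \<in> {u<..<v}} \<le> q"
      using less.hyps[of A'] card_A' less.prems by (auto simp: A'_def)
    have "card (insert m Z) \<le> Suc (card A' div Suc q)"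
      using Z by (simp add: card_insert_if)
    also have "\<dots> = (card A' + Suc q) div Suc q"
      by (simp only: div_add_self2 nat.simps(3) Suc_eq_plus1)
    also have "\<dots> \<le> card A div Suc q"
      using card_A' by (rule div_le_mono)
    finally have "card (insert m Z) \<le> card A div Suc q" .
    moreover have "card {i\<in>A. e i \<in> {u<..<v}} \<le> q"
      if avoid: "insert m Z \<inter> {u<..<v} = {}" for u v
    proof (cases "v \<le> m")
      case True
      then have "card {i\<in>A. e i \<in> {u<..<v}} \<le> card {i\<in>A. e i < m}"
        using less.prems by (intro card_mono) auto
      then show ?thesis
        using m(2) by linarith
    next
      case False
      then have "{i\<in>A. e i \<in> {u<..<v}} = {i\<in>A'. e i \<in> {u<..<v}}"
        using avoid by (auto simp: A'_def)
      moreover have "Z \<inter> {u<..<v} = {}"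
        using avoid by blast
      ultimately show ?thesis
        using sep by simp
    qed
    ultimately show ?thesis
      using Z(1) by (intro exI[of _ "insert m Z"]) auto
  qed
qed

lemma exists_classwise_separators:
  fixes e :: "'a \<Rightarrow> 'b::linorder" and cls :: "'a \<Rightarrow> 'c"
  assumes "finite A"
  shows "\<exists>Z. finite Z
     \<and> card Z \<le> (\<Sum>g\<in>cls ` A. card {i\<in>A. cls i = g} div Suc (q g))
     \<and> (\<forall>g u v. Z \<inter> {u<..<v} = {} \<longrightarrow> card {i\<in>A. cls i = g \<and> e i \<in> {u<..<v}} \<le> q g)"
proof -
  have "\<forall>g. \<exists>Z. finite Z \<and> card Z \<le> card {i\<in>A. cls i = g} div Suc (q g) \<and>
     (\<forall>u v. Z \<inter> {u<..<v} = {} \<longrightarrow> card {i\<in>{i\<in>A. cls i = g}. e i \<in> {u<..<v}} \<le> q g)"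
    by (intro allI exists_sparse_separators) (use assms in simp)
  then obtain Z where "\<forall>g. finite (Z g) \<and> card (Z g) \<le> card {i\<in>A. cls i = g} div Suc (q g) \<and>
     (\<forall>u v. Z g \<inter> {u<..<v} = {} \<longrightarrow> card {i\<in>{i\<in>A. cls i = g}. e i \<in> {u<..<v}} \<le> q g)"
    by (rule choice[THEN exE])
  then have Z: "\<And>g. finite (Z g)"
    "\<And>g. card (Z g) \<le> card {i\<in>A. cls i = g} div Suc (q g)"
    "\<And>g u v. Z g \<inter> {u<..<v} = {} \<Longrightarrow> card {i\<in>A. cls i = g \<and> e i \<in> {u<..<v}} \<le> q g"
    by (simp_all add: conj_assoc)
  have "card (\<Union>g\<in>cls ` A. Z g) \<le> (\<Sum>g\<in>cls ` A. card (Z g))"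
    by (rule card_UN_le) (use assms in simp)
  also have "\<dots> \<le> (\<Sum>g\<in>cls ` A. card {i\<in>A. cls i = g} div Suc (q g))"
    by (intro sum_mono Z(2))
  finally have "card (\<Union>g\<in>cls ` A. Z g) \<le> \<dots>" .
  moreover have "card {i\<in>A. cls i = g \<and> e i \<in> {u<..<v}} \<le> q g"
    if "(\<Union>g\<in>cls ` A. Z g) \<inter> {u<..<v} = {}" for g u v
  proof (cases "g \<in> cls ` A")
    case True
    then show ?thesis
      using that by (intro Z(3)) blast
  next
    case False
    then have "{i\<in>A. cls i = g \<and> e i \<in> {u<..<v}} = {}"
      by auto
    then show ?thesis
      by (simp only: card.empty)
  qed
  ultimately show ?thesis
    using assms Z(1) by (intro exI[of _ "\<Union>g\<in>cls ` A. Z g"]) auto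
qed

definition grid_floor :: "'a::linorder set \<Rightarrow> 'a \<Rightarrow> 'a" where
  "grid_floor Z t = Max {z\<in>Z. z \<le> t}"

definition grid_next :: "'a::linorder set \<Rightarrow> 'a \<Rightarrow> 'a" where
  "grid_next Z t = Min {z\<in>Z. t < z}"

lemma grid_floor_greatest:
  assumes "finite Z" "z0 \<in> Z" "z0 \<le> t"
  shows "grid_floor Z t \<in> Z" "grid_floor Z t \<le> t" "\<And>z. z \<in> Z \<Longrightarrow> z \<le> t \<Longrightarrow> z \<le> grid_floor Z t"
proof -
  have "finite {z\<in>Z. z \<le> t}" "{z\<in>Z. z \<le> t} \<noteq> {}"
    using assms by auto
  from Max_in[OF this] show "grid_floor Z t \<in> Z" "grid_floor Z t \<le> t"
    by (simp_all add: grid_floor_def)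
  show "z \<le> grid_floor Z t" if "z \<in> Z" "z \<le> t" for z
    unfolding grid_floor_def using \<open>finite {z\<in>Z. z \<le> t}\<close> that by (simp add: Max_ge)
qed

lemma grid_next_least:
  assumes "finite Z" "z0 \<in> Z" "t < z0"
  shows "grid_next Z t \<in> Z" "t < grid_next Z t" "\<And>z. z \<in> Z \<Longrightarrow> t < z \<Longrightarrow> grid_next Z t \<le> z"
proof -
  have "finite {z\<in>Z. t < z}" "{z\<in>Z. t < z} \<noteq> {}"
    using assms by auto
  from Min_in[OF this] show "grid_next Z t \<in> Z" "t < grid_next Z t"
    by (simp_all add: grid_next_def)
  show "grid_next Z t \<le> z" if "z \<in> Z" "t < z" for z
    unfolding grid_next_def using \<open>finite {z\<in>Z. t < z}\<close> that by (simp add: Min_le)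
qed

lemma less_grid_next_iff:
  assumes "finite Z" "z0 \<in> Z" "x < z0"
  shows "t < grid_next Z x \<longleftrightarrow> (\<forall>z\<in>Z. x < z \<longrightarrow> t < z)"
  using grid_next_least[OF assms] less_le_trans by blast

lemma grid_floor_eq_iff:
  assumes "finite Z" "x \<in> Z" "z0 \<in> Z" "z0 \<le> t"
  shows "grid_floor Z t = x \<longleftrightarrow> x \<le> t \<and> (\<forall>z\<in>Z. x < z \<longrightarrow> t < z)"
proof
  assume "grid_floor Z t = x"
  then show "x \<le> t \<and> (\<forall>z\<in>Z. x < z \<longrightarrow> t < z)"
    using grid_floor_greatest(2,3)[OF assms(1,3,4)] by (auto simp: not_le[symmetric])
next
  assume x: "x \<le> t \<and> (\<forall>z\<in>Z. x < z \<longrightarrow> t < z)"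
  then have "x \<le> grid_floor Z t"
    using grid_floor_greatest(3)[OF assms(1,3,4)] assms(2) by blast
  moreover have "\<not> x < grid_floor Z t"
    using x grid_floor_greatest(1,2)[OF assms(1,3,4)] by (auto simp: not_less)
  ultimately show "grid_floor Z t = x"
    by simp
qed

lemma grid_next_grid_floor:
  assumes "finite Z" "z0 \<in> Z" "z0 \<le> t"
  shows "grid_next Z (grid_floor Z t) = grid_next Z t"
proof -
  have "{z\<in>Z. grid_floor Z t < z} = {z\<in>Z. t < z}"
    using grid_floor_greatest[OF assms] by (auto simp: not_le[symmetric] intro: le_less_trans)
  then show ?thesis
    by (simp add: grid_next_def)
qed

lemma grid_next_gap:
  assumes "finite Z" "z0 \<in> Z" "t < z0"
  shows "Z \<inter> {t<..<grid_next Z t} = {}"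
  using grid_next_least(3)[OF assms] by fastforce

lemma grid_floor_gap:
  assumes "finite Z" "z0 \<in> Z" "z0 \<le> t"
  shows "Z \<inter> {grid_floor Z t<..<Suc t} = {}"
  using grid_floor_greatest(3)[OF assms] by fastforce

definition grid_box :: "nat set \<Rightarrow> nat set \<Rightarrow> nat \<times> nat \<Rightarrow> box" where
  "grid_box X Y = (\<lambda>(x, y). (x, grid_next X x, y, if \<exists>z\<in>Y. y < z then Some (grid_next Y y) else None))"

lemma in_grid_box_iff:
  assumes X: "finite X" "a \<in> X" "b \<in> X" "X \<subseteq> {a..b}" and Y: "finite Y" "0 \<in> Y"
    and "x \<in> X" "x < b" "y \<in> Y"
  shows "in_box (t, s) (grid_box X Y (x, y)) \<longleftrightarrow> a \<le> t \<and> t < b \<and> grid_floor X t = x \<and> grid_floor Y s = y"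
proof -
  have x_part: "x \<le> t \<and> t < grid_next X x \<longleftrightarrow> a \<le> t \<and> t < b \<and> grid_floor X t = x"
  proof
    assume x: "x \<le> t \<and> t < grid_next X x"
    have "a \<le> t"
      using assms(7) X(4) x by auto
    moreover have "t < b"
      using x grid_next_least(3)[OF X(1,3) assms(8) X(3) assms(8)] by simp
    moreover have "grid_floor X t = x"
      using grid_floor_eq_iff[OF X(1) assms(7) X(2) \<open>a \<le> t\<close>] less_grid_next_iff[OF X(1,3) assms(8)] x
      by simp
    ultimately show "a \<le> t \<and> t < b \<and> grid_floor X t = x"
      by simp
  next
    assume "a \<le> t \<and> t < b \<and> grid_floor X t = x"
    then show "x \<le> t \<and> t < grid_next X x"
      using grid_floor_eq_iff[OF X(1) assms(7) X(2), of t] less_grid_next_iff[OF X(1,3) assms(8)] by simp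
  qed
  have y_part: "y \<le> s \<and> (\<forall>z\<in>Y. y < z \<longrightarrow> s < z) \<longleftrightarrow> grid_floor Y s = y"
    using grid_floor_eq_iff[OF Y(1) assms(9) Y(2)] by simp
  have "in_box (t, s) (grid_box X Y (x, y)) \<longleftrightarrow> (x \<le> t \<and> t < grid_next X x)
      \<and> (y \<le> s \<and> (\<forall>z\<in>Y. y < z \<longrightarrow> s < z))"
  proof (cases "\<exists>z\<in>Y. y < z")
    case True
    then show ?thesis
      using less_grid_next_iff[OF Y(1)] by (auto simp: in_box_def grid_box_def)
  qed (auto simp: in_box_def grid_box_def)
  also have "\<dots> \<longleftrightarrow> a \<le> t \<and> t < b \<and> grid_floor X t = x \<and> grid_floor Y s = y"
    by (simp only: x_part y_part conj_assoc)
  finally show ?thesis .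
qed

lemma step_function_on_cells:
  fixes cell :: "nat \<Rightarrow> nat \<Rightarrow> 'c" and box :: "'c \<Rightarrow> box"
  assumes "distinct L"
    and in_box: "\<And>c t s. c \<in> set L \<Longrightarrow> in_box (t, s) (box c) \<longleftrightarrow> a \<le> t \<and> t < b \<and> cell t s = c"
    and cell: "\<And>t s. a \<le> t \<Longrightarrow> t < b \<Longrightarrow> cell t s \<in> set L"
    and f: "\<And>t s. a \<le> t \<Longrightarrow> t < b \<Longrightarrow> f (t, s) = g (cell t s)"
  shows "step_function_on a b f (length L)"
  unfolding step_function_on_def
proof (intro exI[of _ "map box L"] conjI allI impI ballI)
  fix B pt
  assume "B \<in> set (map box L)" "in_box pt B"
  then show "a \<le> fst pt" "fst pt < b"
    using in_box[of _ "fst pt" "snd pt"] by auto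
next
  fix t s
  assume "a \<le> t \<and> t < b"
  then have "i < length L \<and> in_box (t, s) (map box L ! i) \<longleftrightarrow> i < length L \<and> L ! i = cell t s" for i
    using in_box[of "L ! i"] cell[of t s] by auto
  then show "\<exists>!i. i < length L \<and> in_box (t, s) (map box L ! i)"
    using distinct_Ex1[OF assms(1)] cell \<open>a \<le> t \<and> t < b\<close> by simp
next
  fix i p q
  assume "i < length L" "in_box p (map box L ! i)" "in_box q (map box L ! i)"
  then have "f p = g (L ! i)" "f q = g (L ! i)"
    using in_box[of "L ! i" "fst _" "snd _"] f by (metis nth_map nth_mem prod.collapse)+
  then show "f p = f q"
    by simp
qed simp

lemma step_function_on_grid:
  fixes X Y :: "nat set" and h :: "nat \<Rightarrow> nat \<Rightarrow> 'v"
  assumes X: "finite X" "a \<in> X" "b \<in> X" "X \<subseteq> {a..b}" and "a < b"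
    and Y: "finite Y" "0 \<in> Y"
  shows "step_function_on a b (\<lambda>p. h (grid_next X (fst p)) (grid_floor Y (snd p)))
           ((card X - 1) * card Y)"
proof -
  obtain L where L: "set L = (X - {b}) \<times> Y" "distinct L"
    using finite_distinct_list[of "(X - {b}) \<times> Y"] X(1) Y(1) by auto
  have "length L = (card X - 1) * card Y"
    using distinct_card[OF L(2)] X Y by (simp add: L(1) card_cartesian_product)
  moreover have "step_function_on a b (\<lambda>p. h (grid_next X (fst p)) (grid_floor Y (snd p))) (length L)"
  proof (rule step_function_on_cells[where box = "grid_box X Y" and cell = "\<lambda>t s. (grid_floor X t, grid_floor Y s)"
        and g = "\<lambda>(x, y). h (grid_next X x) y", OF L(2)])
    fix c t s
    assume "c \<in> set L"
    then have "c \<in> (X - {b}) \<times> Y"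
      using L(1) by simp
    then obtain x y where "c = (x, y)" "x \<in> X - {b}" "y \<in> Y"
      by blast
    moreover have "x < b"
      using \<open>x \<in> X - {b}\<close> X(4) by (auto simp: order.order_iff_strict)
    ultimately show "in_box (t, s) (grid_box X Y c) \<longleftrightarrow> a \<le> t \<and> t < b \<and> (grid_floor X t, grid_floor Y s) = c"
      using in_grid_box_iff[OF X Y] by auto
  next
    fix t s
    assume "a \<le> t" "t < b"
    then show "(grid_floor X t, grid_floor Y s) \<in> set L"
      using grid_floor_greatest(1,2)[OF X(1,2) \<open>a \<le> t\<close>] grid_floor_greatest(1)[OF Y(1,2), of s] L(1) by auto
    show "h (grid_next X (fst (t, s))) (grid_floor Y (snd (t, s)))
        = (\<lambda>(x, y). h (grid_next X x) y) (grid_floor X t, grid_floor Y s)"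
      using grid_next_grid_floor[OF X(1,2) \<open>a \<le> t\<close>] by simp
  qed
  ultimately show ?thesis
    by simp
qed

definition dominance_sum :: "'a set \<Rightarrow> ('a \<Rightarrow> nat) \<Rightarrow> ('a \<Rightarrow> nat) \<Rightarrow> ('a \<Rightarrow> nat) \<Rightarrow> nat \<Rightarrow> nat \<Rightarrow> nat"
  where "dominance_sum A w x y t s = (\<Sum>i\<in>{i\<in>A. t < x i \<and> y i \<le> s}. w i)"

lemma dominance_sum_mono:
  assumes "finite A" "t \<le> t'" "s' \<le> s"
  shows "dominance_sum A w x y t' s' \<le> dominance_sum A w x y t s"
  unfolding dominance_sum_def using assms by (intro sum_mono2) auto

lemma dominance_sum_grid_error:
  fixes L :: "'c \<Rightarrow> real"
  assumes "finite A" "t < t'" "s' \<le> s"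
    and x_sep: "\<And>g. card {i\<in>A. cls i = g \<and> x i \<in> {t<..<t'}} \<le> q g"
    and y_sep: "\<And>g. card {i\<in>A. cls i = g \<and> y i \<in> {s'<..<Suc s}} \<le> q g"
    and w: "\<And>i. i \<in> A \<Longrightarrow> real (w i) \<le> 2 * L (cls i)"
  shows "real (dominance_sum A w x y t s) \<le> real (dominance_sum A w x y (t' - 1) s')
           + (\<Sum>g\<in>cls ` {i\<in>A. t < x i \<and> y i \<le> s}. 4 * real (q g) * L g)"
proof -
  define H where "H = {i\<in>A. t < x i \<and> y i \<le> s}"
  define H' where "H' = {i\<in>A. t' - 1 < x i \<and> y i \<le> s'}"
  define D where "D = H - H'"
  have "finite H" "H' \<subseteq> H"
    using assms(1-3) by (auto simp: H_def H'_def)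
  moreover have "dominance_sum A w x y t s = sum w H" "dominance_sum A w x y (t' - 1) s' = sum w H'"
    unfolding dominance_sum_def H_def H'_def by (rule refl)+
  ultimately have split: "dominance_sum A w x y t s = sum w D + dominance_sum A w x y (t' - 1) s'"
    by (simp add: D_def sum.subset_diff)
  have "real (sum w {i\<in>D. cls i = g}) \<le> 4 * real (q g) * L g" if "g \<in> cls ` H" for g
  proof -
    have "0 \<le> L g"
      using that w by (force simp: H_def)
    have "{i\<in>D. cls i = g} \<subseteq> {i\<in>A. cls i = g \<and> x i \<in> {t<..<t'}} \<union> {i\<in>A. cls i = g \<and> y i \<in> {s'<..<Suc s}}"
      using assms(2) by (auto simp: D_def H_def H'_def)
    then have "card {i\<in>D. cls i = g} \<le> card ({i\<in>A. cls i = g \<and> x i \<in> {t<..<t'}} \<union> {i\<in>A. cls i = g \<and> y i \<in> {s'<..<Suc s}})"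
      using assms(1) by (intro card_mono) auto
    also have "\<dots> \<le> card {i\<in>A. cls i = g \<and> x i \<in> {t<..<t'}} + card {i\<in>A. cls i = g \<and> y i \<in> {s'<..<Suc s}}"
      by (rule card_Un_le)
    also have "\<dots> \<le> 2 * q g"
      using add_mono[OF x_sep[of g] y_sep[of g]] by simp
    finally have card_le: "card {i\<in>D. cls i = g} \<le> 2 * q g" .
    have "real (sum w {i\<in>D. cls i = g}) = (\<Sum>i\<in>{i\<in>D. cls i = g}. real (w i))"
      by simp
    also have "\<dots> \<le> real (card {i\<in>D. cls i = g}) * (2 * L g)"
      by (rule sum_bounded_above) (use w in \<open>auto simp: D_def H_def\<close>)
    also have "\<dots> \<le> real (2 * q g) * (2 * L g)"
      using card_le \<open>0 \<le> L g\<close> by (intro mult_right_mono) simp_all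
    finally show ?thesis
      by simp
  qed
  moreover have "sum w D = (\<Sum>g\<in>cls ` H. sum w {i\<in>D. cls i = g})"
    using \<open>finite H\<close> by (intro sum.group[symmetric]) (auto simp: D_def)
  ultimately have "real (sum w D) \<le> (\<Sum>g\<in>cls ` H. 4 * real (q g) * L g)"
    by (simp only: of_nat_sum) (rule sum_mono)
  then show ?thesis
    using split by (simp add: H_def)
qed

lemma dominance_sum_step_approximation:
  fixes A :: "'a set" and w x y :: "'a \<Rightarrow> nat" and cls :: "'a \<Rightarrow> 'c" and q :: "'c \<Rightarrow> nat" and L :: "'c \<Rightarrow> real"
  assumes "finite A" "a < b"
    and w: "\<And>i. i \<in> A \<Longrightarrow> real (w i) \<le> 2 * L (cls i)"
  defines "N \<equiv> (\<Sum>g\<in>cls ` A. card {i\<in>A. cls i = g} div Suc (q g))"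
  shows "\<exists>f k. step_function_on a b f k \<and> k \<le> (1 + N)\<^sup>2
     \<and> (\<forall>t s. a \<le> t \<and> t < b \<longrightarrow> f (t, s) \<le> dominance_sum A w x y t s
          \<and> real (dominance_sum A w x y t s)
            \<le> real (f (t, s)) + (\<Sum>g\<in>cls ` {i\<in>A. t < x i \<and> y i \<le> s}. 4 * real (q g) * L g))"
proof -
  obtain ZX where ZX: "finite ZX" "card ZX \<le> N"
    and x_sep: "\<And>g u v. ZX \<inter> {u<..<v} = {} \<Longrightarrow> card {i\<in>A. cls i = g \<and> x i \<in> {u<..<v}} \<le> q g"
    using exists_classwise_separators[OF assms(1), of cls q x] unfolding N_def by blast
  obtain ZY where ZY: "finite ZY" "card ZY \<le> N"
    and y_sep: "\<And>g u v. ZY \<inter> {u<..<v} = {} \<Longrightarrow> card {i\<in>A. cls i = g \<and> y i \<in> {u<..<v}} \<le> q g"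
    using exists_classwise_separators[OF assms(1), of cls q y] unfolding N_def by blast
  define X where "X = {a, b} \<union> ZX \<inter> {a<..<b}"
  define Y where "Y = insert 0 ZY"
  have X: "finite X" "a \<in> X" "b \<in> X" "X \<subseteq> {a..b}" and Y: "finite Y" "0 \<in> Y"
    using ZX(1) ZY(1) assms(2) by (auto simp: X_def Y_def)
  have "card X \<le> card {a, b} + card (ZX \<inter> {a<..<b})"
    unfolding X_def by (rule card_Un_le)
  moreover have "card {a, b} \<le> 2" "card (ZX \<inter> {a<..<b}) \<le> N"
    using ZX card_mono[OF ZX(1), of "ZX \<inter> {a<..<b}"] by (auto simp: card_insert_if)
  ultimately have "card X - 1 \<le> 1 + N"
    by linarith
  moreover have "card Y \<le> 1 + N"
    using ZY by (simp add: Y_def card_insert_if)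
  ultimately have size: "(card X - 1) * card Y \<le> (1 + N)\<^sup>2"
    unfolding power2_eq_square by (rule mult_le_mono)
  \<comment> \<open>the corner of the grid cell of p at which the dominance count is smallest\<close>
  define f where "f p = dominance_sum A w x y (grid_next X (fst p) - 1) (grid_floor Y (snd p))" for p
  have "step_function_on a b f ((card X - 1) * card Y)"
    unfolding f_def by (rule step_function_on_grid[OF X assms(2) Y])
  moreover have "f (t, s) \<le> dominance_sum A w x y t s
      \<and> real (dominance_sum A w x y t s)
        \<le> real (f (t, s)) + (\<Sum>g\<in>cls ` {i\<in>A. t < x i \<and> y i \<le> s}. 4 * real (q g) * L g)"
    if "a \<le> t" "t < b" for t s
  proof -
    define t' where "t' = grid_next X t"
    define s' where "s' = grid_floor Y s"
    have "t < t'" "t' \<le> b"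
      using grid_next_least[OF X(1,3) \<open>t < b\<close>] X(3) \<open>t < b\<close> unfolding t'_def by auto
    moreover have "s' \<le> s"
      using grid_floor_greatest[OF Y(1,2)] unfolding s'_def by auto
    moreover have "ZX \<inter> {t<..<t'} = {}"
      using grid_next_gap[OF X(1,3) \<open>t < b\<close>] \<open>a \<le> t\<close> \<open>t' \<le> b\<close> by (auto simp: X_def t'_def)
    moreover have "ZY \<inter> {s'<..<Suc s} = {}"
      using grid_floor_gap[OF Y(1,2), of s] by (auto simp: Y_def s'_def)
    ultimately show ?thesis
      using dominance_sum_mono[OF assms(1), of t "t' - 1" s' s w x y]
        dominance_sum_grid_error[where cls = cls and x = x and y = y and q = q and w = w and L = L,
          OF assms(1) _ _ x_sep y_sep w]
      by (simp add: f_def t'_def s'_def)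
  qed
  ultimately show ?thesis
    using size by blast
qed

lemma div_Suc_quarter_floor_le:
  assumes "0 < \<delta>"
  shows "real (n div Suc (nat \<lfloor>\<delta> * real n\<rfloor> div 4)) \<le> 4 / \<delta>"
proof -
  define m where "m = nat \<lfloor>\<delta> * real n\<rfloor>"
  have "\<delta> * real n < real m + 1"
    using assms by (simp add: m_def floor_less_iff)
  also have "\<dots> \<le> 4 * real (Suc (m div 4))"
  proof -
    have "m + 1 \<le> 4 * Suc (m div 4)"
      by presburger
    then show ?thesis
      using of_nat_le_iff[where 'a = real, THEN iffD2] by fastforce
  qed
  finally have "real n / real (Suc (m div 4)) \<le> 4 / \<delta>"
    using assms by (simp add: field_simps)
  moreover have "real (n div Suc (m div 4)) \<le> real n / real (Suc (m div 4))"
    by (rule of_nat_div_le_of_nat)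
  ultimately show ?thesis
    by (simp add: m_def)
qed

lemma four_mult_quarter_floor_le:
  assumes "0 \<le> L" "0 \<le> x"
  shows "4 * real (nat \<lfloor>x\<rfloor> div 4) * L \<le> L * of_int \<lfloor>x\<rfloor>"
proof -
  have "real (4 * (nat \<lfloor>x\<rfloor> div 4)) \<le> real (nat \<lfloor>x\<rfloor>)"
    by (simp only: of_nat_le_iff)
  also have "\<dots> = of_int \<lfloor>x\<rfloor>"
    using assms(2) by simp
  finally show ?thesis
    using assms(1) by (simp add: mult_left_mono mult.commute)
qed

lemma le_two_powr_floor_log:
  assumes "0 < eps" "eps \<le> 1" "0 < v"
  shows "v \<le> 2 * (1 + eps) powr real_of_int \<lfloor>log (1 + eps) v\<rfloor>"
proof -
  define p where "p = \<lfloor>log (1 + eps) v\<rfloor>"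
  have "v < (1 + eps) powr (real_of_int p + 1)"
    using floor_log_eq_powr_iff[of v "1 + eps" p] assms by (simp add: p_def)
  also have "\<dots> = (1 + eps) * (1 + eps) powr real_of_int p"
    using assms by (simp add: powr_add)
  also have "\<dots> \<le> 2 * (1 + eps) powr real_of_int p"
    using assms by (intro mult_right_mono) auto
  finally show ?thesis
    by (simp add: p_def)
qed

lemma one_plus_eight_mult_sq_le:
  fixes x :: real
  assumes "0 \<le> x"
  shows "(1 + 8 * x)\<^sup>2 \<le> 81 * max 1 (x\<^sup>2)"
proof (cases "x \<le> 1")
  case True
  then have "(1 + 8 * x)\<^sup>2 \<le> 9\<^sup>2"
    using assms by (intro power_mono) auto
  then show ?thesis
    by (simp add: max_def)
next
  case False
  then have "(1 + 8 * x)\<^sup>2 \<le> (9 * x)\<^sup>2"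
    using assms by (intro power_mono) auto
  then show ?thesis
    by (simp add: max_def power_mult_distrib)
qed

lemma sum_class_div_le:
  assumes "finite A" "finite G" "cls ` A \<subseteq> G" "0 < \<delta>"
  shows "real (\<Sum>g\<in>cls ` A. card {i\<in>A. cls i = g}
            div Suc (nat \<lfloor>\<delta> * real (card {i\<in>A. cls i = g})\<rfloor> div 4))
         \<le> real (card G) * (4 / \<delta>)"
proof -
  have "real (\<Sum>g\<in>cls ` A. card {i\<in>A. cls i = g}
            div Suc (nat \<lfloor>\<delta> * real (card {i\<in>A. cls i = g})\<rfloor> div 4))
        \<le> (\<Sum>g\<in>cls ` A. 4 / \<delta>)"
    unfolding of_nat_sum by (intro sum_mono div_Suc_quarter_floor_le assms(4))
  also have "\<dots> = real (card (cls ` A)) * (4 / \<delta>)"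
    by simp
  also have "\<dots> \<le> real (card G) * (4 / \<delta>)"
    using card_mono[OF assms(2,3)] assms(4) by (intro mult_right_mono) auto
  finally show ?thesis .
qed

lemma dominance_sum_rounded_step_approximation:
  fixes A :: "'a set" and w x y :: "'a \<Rightarrow> nat" and cls :: "'a \<Rightarrow> 'c" and L :: "'c \<Rightarrow> real"
  assumes "finite A" "a < b" "finite G" "cls ` A \<subseteq> G" "0 < \<delta>"
    and w: "\<And>i. i \<in> A \<Longrightarrow> real (w i) \<le> 2 * L (cls i)"
  shows "\<exists>f k. step_function_on a b f k \<and> real k \<le> (1 + real (card G) * (4 / \<delta>))\<^sup>2
     \<and> (\<forall>t s. a \<le> t \<and> t < b \<longrightarrow> f (t, s) \<le> dominance_sum A w x y t s
          \<and> real (dominance_sum A w x y t s) \<le> real (f (t, s))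
             + (\<Sum>g\<in>cls ` {i\<in>A. t < x i \<and> y i \<le> s}. L g * of_int \<lfloor>\<delta> * real (card {i\<in>A. cls i = g})\<rfloor>))"
proof -
  \<comment> \<open>4 = one gap per axis, times the factor 2 in the weight bound\<close>
  define q where "q g = nat \<lfloor>\<delta> * real (card {i\<in>A. cls i = g})\<rfloor> div 4" for g
  obtain f k where "step_function_on a b f k"
    and k: "k \<le> (1 + (\<Sum>g\<in>cls ` A. card {i\<in>A. cls i = g} div Suc (q g)))\<^sup>2"
    and approx: "\<And>t s. a \<le> t \<and> t < b \<Longrightarrow> f (t, s) \<le> dominance_sum A w x y t s
          \<and> real (dominance_sum A w x y t s)
            \<le> real (f (t, s)) + (\<Sum>g\<in>cls ` {i\<in>A. t < x i \<and> y i \<le> s}. 4 * real (q g) * L g)"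
    using dominance_sum_step_approximation[where w = w and cls = cls and L = L and x = x and y = y and q = q,
        OF assms(1,2) w] by blast
  have "real k \<le> real ((1 + (\<Sum>g\<in>cls ` A. card {i\<in>A. cls i = g} div Suc (q g)))\<^sup>2)"
    using k by (simp only: of_nat_le_iff)
  also have "\<dots> = (1 + real (\<Sum>g\<in>cls ` A. card {i\<in>A. cls i = g} div Suc (q g)))\<^sup>2"
    by simp
  also have "\<dots> \<le> (1 + real (card G) * (4 / \<delta>))\<^sup>2"
    using sum_class_div_le[OF assms(1,3,4,5)] unfolding q_def by (intro power_mono add_left_mono) (simp_all add: sum_nonneg)
  finally have "real k \<le> (1 + real (card G) * (4 / \<delta>))\<^sup>2" .
  moreover have "(\<Sum>g\<in>cls ` {i\<in>A. t < x i \<and> y i \<le> s}. 4 * real (q g) * L g)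
      \<le> (\<Sum>g\<in>cls ` {i\<in>A. t < x i \<and> y i \<le> s}. L g * of_int \<lfloor>\<delta> * real (card {i\<in>A. cls i = g})\<rfloor>)"
    for t s
  proof (rule sum_mono)
    fix g
    assume "g \<in> cls ` {i\<in>A. t < x i \<and> y i \<le> s}"
    then have "0 \<le> L g"
      using w by force
    then show "4 * real (q g) * L g \<le> L g * of_int \<lfloor>\<delta> * real (card {i\<in>A. cls i = g})\<rfloor>"
      unfolding q_def using \<open>0 < \<delta>\<close> by (intro four_mult_quarter_floor_le) simp_all
  qed
  ultimately show ?thesis
    using \<open>step_function_on a b f k\<close> approx by (blast intro: order_trans add_left_mono)
qed

lemma rows_subset_nonempty:
  assumes "W \<in> rows I"
  shows "W \<subseteq> I" "W \<noteq> {}"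
  using assms by (auto simp: rows_def row_of_def)

lemma rows_same_ypos:
  assumes "W \<in> rows I" "R \<in> W" "R' \<in> W"
  shows "ypos R = ypos R'"
  using assms by (auto simp: rows_def row_of_def)

lemma rows_disjoint:
  assumes "W \<in> rows I" "W' \<in> rows I" "W \<noteq> W'"
  shows "W \<inter> W' = {}"
  using assms by (auto simp: rows_def row_of_def)

lemma rcp_row_finite:
  assumes "rcp_instance I" "W \<in> rows I"
  shows "finite W"
  using assms rows_subset_nonempty(1)[OF assms(2)] by (auto simp: rcp_instance_def intro: finite_subset)

lemma rcp_row_same_val:
  assumes "rcp_instance I" "W \<in> rows I" "R \<in> W" "R' \<in> W"
  shows "val R = val R'"
proof -
  have "\<forall>W\<in>rows I. \<forall>R\<in>W. \<forall>R'\<in>W. val R = val R'"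
    using assms(1) unfolding rcp_instance_def by (elim conjE) assumption
  then show ?thesis
    using assms(2-4) by (metis (no_types))
qed

lemma rcp_row_separated:
  assumes "rcp_instance I" "W \<in> rows I" "R \<in> W" "R' \<in> W" "R \<noteq> R'"
  shows "right R \<le> left R' \<or> right R' \<le> left R"
proof -
  have "\<forall>R\<in>I. \<forall>R'\<in>I. R \<noteq> R' \<longrightarrow> ypos R \<noteq> ypos R' \<or> right R \<le> left R' \<or> right R' \<le> left R"
    using assms(1) unfolding rcp_instance_def by (elim conjE) assumption
  then show ?thesis
    using assms(3-5) rows_subset_nonempty(1)[OF assms(2)] rows_same_ypos[OF assms(2-4)] by blast
qed

lemma rcp_row_contiguous:
  assumes "rcp_instance I" "W \<in> rows I" "R1 \<in> W" "left R1 \<le> x" "R2 \<in> W" "x < right R2"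
  shows "\<exists>R\<in>W. left R \<le> x \<and> x < right R"
proof -
  have "\<forall>W\<in>rows I. \<forall>x::nat. (\<exists>R\<in>W. left R \<le> x) \<and> (\<exists>R\<in>W. x < right R)
          \<longrightarrow> (\<exists>R\<in>W. left R \<le> x \<and> x < right R)"
    using assms(1) unfolding rcp_instance_def by (elim conjE) assumption
  then show ?thesis
    using assms(2-6) by blast
qed

lemma rcp_instance_rect:
  assumes "rcp_instance I" "R \<in> I"
  shows "left R < right R" "0 < val R"
proof -
  have "\<forall>R\<in>I. left R < right R \<and> cost R > 0 \<and> val R > 0"
    using assms(1) unfolding rcp_instance_def by (elim conjE) assumption
  then show "left R < right R" "0 < val R"
    using assms(2) by blast+
qed

definition leftmost :: "rect set \<Rightarrow> rect" where
  "leftmost W = (SOME R. R \<in> W \<and> (\<forall>R'\<in>W. left R \<le> left R'))"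

lemma leftmost_least:
  assumes "rcp_instance I" "W \<in> rows I"
  shows "leftmost W \<in> W" "\<And>R. R \<in> W \<Longrightarrow> left (leftmost W) \<le> left R"
proof -
  have fin: "finite (left ` W)" "left ` W \<noteq> {}"
    using rcp_row_finite[OF assms] rows_subset_nonempty(2)[OF assms(2)] by auto
  obtain R where "R \<in> W" "left R = Min (left ` W)"
    using Min_in[OF fin] by (metis imageE)
  moreover have "\<forall>R'\<in>W. Min (left ` W) \<le> left R'"
    using Min_le[OF fin(1)] by blast
  ultimately have "R \<in> W \<and> (\<forall>R'\<in>W. left R \<le> left R')"
    by simp
  then have "leftmost W \<in> W \<and> (\<forall>R'\<in>W. left (leftmost W) \<le> left R')"
    unfolding leftmost_def by (rule someI)
  then show "leftmost W \<in> W" "\<And>R. R \<in> W \<Longrightarrow> left (leftmost W) \<le> left R"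
    by auto
qed

lemma leftmost_unique:
  assumes "rcp_instance I" "W \<in> rows I" "R \<in> W" "\<forall>R'\<in>W. left R \<le> left R'"
  shows "R = leftmost W"
proof (rule ccontr)
  assume "R \<noteq> leftmost W"
  moreover have "left R = left (leftmost W)"
    using leftmost_least[OF assms(1,2)] assms(3,4) by (meson antisym)
  moreover have "left R < right R" "left (leftmost W) < right (leftmost W)"
    using rcp_instance_rect(1)[OF assms(1)] rows_subset_nonempty(1)[OF assms(2)] assms(3) leftmost_least(1)[OF assms(1,2)]
    by auto
  ultimately show False
    using rcp_row_separated[OF assms(1,2,3) leftmost_least(1)[OF assms(1,2)]] by auto
qed

definition class_of :: "real \<Rightarrow> rect set \<Rightarrow> real \<times> int" where
  "class_of eps W = (cost (leftmost W), \<lfloor>log (1 + eps) (real (val (leftmost W)))\<rfloor>)"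

lemma row_class_iff:
  assumes "rcp_instance I" "Ws \<subseteq> rows I" "0 < eps"
  shows "W \<in> row_class eps Ws c p \<longleftrightarrow> W \<in> Ws \<and> class_of eps W = (c, p)"
proof (cases "W \<in> Ws")
  case True
  then have W: "W \<in> rows I"
    using assms(2) by blast
  have "0 < real (val (leftmost W))"
    using rcp_instance_rect(2)[OF assms(1)] rows_subset_nonempty(1)[OF W] leftmost_least(1)[OF assms(1) W] by auto
  then have "\<lfloor>log (1 + eps) (real (val (leftmost W)))\<rfloor> = p \<longleftrightarrow>
      (1 + eps) powr real_of_int p \<le> real (val (leftmost W))
      \<and> real (val (leftmost W)) < (1 + eps) powr (real_of_int p + 1)"
    using assms(3) by (simp add: floor_log_eq_powr_iff)
  moreover have "W \<in> row_class eps Ws c p \<longleftrightarrow> cost (leftmost W) = c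
      \<and> (1 + eps) powr real_of_int p \<le> real (val (leftmost W))
      \<and> real (val (leftmost W)) < (1 + eps) powr (real_of_int p + 1)"
  proof
    assume "W \<in> row_class eps Ws c p"
    then obtain R where "R \<in> W" "\<forall>R'\<in>W. left R \<le> left R'" "cost R = c"
      "(1 + eps) powr real_of_int p \<le> real (val R)" "real (val R) < (1 + eps) powr (real_of_int p + 1)"
      by (auto simp: row_class_def)
    then show "cost (leftmost W) = c
      \<and> (1 + eps) powr real_of_int p \<le> real (val (leftmost W))
      \<and> real (val (leftmost W)) < (1 + eps) powr (real_of_int p + 1)"
      using leftmost_unique[OF assms(1) W] by blast
  qed (use True leftmost_least[OF assms(1) W] in \<open>auto simp: row_class_def\<close>)
  ultimately show ?thesis
    using True by (simp add: class_of_def)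
next
  case False
  then show ?thesis
    by (simp add: row_class_def)
qed

definition prefix_end :: "rect set \<Rightarrow> rect set \<Rightarrow> nat" where
  "prefix_end W S = Max (right ` (W \<inter> S))"

lemma prefix_hits_ray_iff:
  assumes "rcp_instance I" "W \<in> rows I" "W \<inter> S \<noteq> {}"
    and prefix: "\<forall>R\<in>S \<inter> W. \<forall>R'\<in>W. right R' \<le> left R \<longrightarrow> R' \<in> S"
    and "R0 \<in> W" "left R0 \<le> t"
  shows "(\<exists>R\<in>W \<inter> S. hits_ray R s t) \<longleftrightarrow> t < prefix_end W S \<and> ypos (leftmost W) \<le> s"
proof -
  have fin: "finite (right ` (W \<inter> S))" "right ` (W \<inter> S) \<noteq> {}"
    using rcp_row_finite[OF assms(1,2)] assms(3) by auto
  obtain Rend where Rend: "Rend \<in> W \<inter> S" "prefix_end W S = right Rend"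
    using Max_in[OF fin] unfolding prefix_end_def by auto
  have right_le: "right R \<le> prefix_end W S" if "R \<in> W \<inter> S" for R
    using Max_ge[OF fin(1)] that unfolding prefix_end_def by auto
  have ypos_eq: "ypos R = ypos (leftmost W)" if "R \<in> W" for R
    using rows_same_ypos[OF assms(2) that leftmost_least(1)[OF assms(1,2)]] .
  show ?thesis
  proof
    assume "\<exists>R\<in>W \<inter> S. hits_ray R s t"
    then show "t < prefix_end W S \<and> ypos (leftmost W) \<le> s"
      using right_le ypos_eq unfolding hits_ray_def by (metis IntD1 order.strict_trans2)
  next
    assume t: "t < prefix_end W S \<and> ypos (leftmost W) \<le> s"
    obtain R where R: "R \<in> W" "left R \<le> t" "t < right R"
      using rcp_row_contiguous[OF assms(1,2,5,6), of Rend] Rend t by auto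
    have "R \<in> S"
    proof (cases "R = Rend")
      case False
      then have "right R \<le> left Rend"
        using rcp_row_separated[OF assms(1,2) R(1), of Rend] Rend t R by auto
      then show ?thesis
        using prefix Rend R(1) by blast
    qed (use Rend in simp)
    then show "\<exists>R\<in>W \<inter> S. hits_ray R s t"
      using R t ypos_eq unfolding hits_ray_def by auto
  qed
qed

lemma sum_val_hits_ray_row:
  assumes "rcp_instance I" "W \<in> rows I"
    and prefix: "\<forall>R\<in>S \<inter> W. \<forall>R'\<in>W. right R' \<le> left R \<longrightarrow> R' \<in> S"
    and "R0 \<in> W" "left R0 \<le> t"
  shows "(\<Sum>R\<in>{R\<in>W \<inter> S. hits_ray R s t}. val R)
    = (if W \<inter> S \<noteq> {} \<and> t < prefix_end W S \<and> ypos (leftmost W) \<le> s then val (leftmost W) else 0)"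
proof (cases "\<exists>R\<in>W \<inter> S. hits_ray R s t")
  case True
  then obtain R where R: "R \<in> W \<inter> S" "hits_ray R s t"
    by blast
  have "R' = R" if "R' \<in> W \<inter> S" "hits_ray R' s t" for R'
    using rcp_row_separated[OF assms(1,2), of R' R] R that unfolding hits_ray_def by auto
  then have "{R\<in>W \<inter> S. hits_ray R s t} = {R}"
    using R by blast
  moreover have "val R = val (leftmost W)"
    using rcp_row_same_val[OF assms(1,2)] R(1) leftmost_least(1)[OF assms(1,2)] by blast
  ultimately show ?thesis
    using True prefix_hits_ray_iff[OF assms(1,2) _ prefix assms(4,5)] by auto
next
  case False
  then have "{R\<in>W \<inter> S. hits_ray R s t} = {}"
    by blast
  moreover have "\<not> (W \<inter> S \<noteq> {} \<and> t < prefix_end W S \<and> ypos (leftmost W) \<le> s)"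
    using False prefix_hits_ray_iff[OF assms(1,2) _ prefix assms(4,5)] by blast
  ultimately show ?thesis
    by (simp only: sum.empty if_False)
qed

lemma ray_sum_eq_dominance_sum:
  assumes "rcp_instance I" "Ws \<subseteq> rows I" "finite Ws" "S \<subseteq> \<Union>Ws"
    and prefix: "\<forall>W\<in>Ws. \<forall>R\<in>S \<inter> W. \<forall>R'\<in>W. right R' \<le> left R \<longrightarrow> R' \<in> S"
    and reach: "\<forall>W\<in>Ws. \<exists>R\<in>W. left R \<le> t"
  shows "(\<Sum>R\<in>{R\<in>S. hits_ray R s t}. val R)
    = dominance_sum {W\<in>Ws. W \<inter> S \<noteq> {}} (\<lambda>W. val (leftmost W)) (\<lambda>W. prefix_end W S)
        (\<lambda>W. ypos (leftmost W)) t s"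
proof -
  define H where "H W = {R\<in>W \<inter> S. hits_ray R s t}" for W
  have row: "W \<in> rows I" if "W \<in> Ws" for W
    using assms(2) that by blast
  have "{R\<in>S. hits_ray R s t} = (\<Union>W\<in>Ws. H W)"
    using assms(4) by (auto simp: H_def)
  moreover have "(\<Sum>R\<in>(\<Union>W\<in>Ws. H W). val R) = (\<Sum>W\<in>Ws. sum val (H W))"
  proof (rule sum.UNION_disjoint)
    show "\<forall>W\<in>Ws. finite (H W)"
      using rcp_row_finite[OF assms(1) row] by (simp add: H_def)
    show "\<forall>W\<in>Ws. \<forall>W'\<in>Ws. W \<noteq> W' \<longrightarrow> H W \<inter> H W' = {}"
      using rows_disjoint[OF row row] by (auto simp: H_def)
  qed (rule assms(3))
  moreover have "sum val (H W) = (if W \<inter> S \<noteq> {} \<and> t < prefix_end W S \<and> ypos (leftmost W) \<le> s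
      then val (leftmost W) else 0)" if W: "W \<in> Ws" for W
  proof -
    obtain R0 where "R0 \<in> W" "left R0 \<le> t"
      using reach W by blast
    moreover have "\<forall>R\<in>S \<inter> W. \<forall>R'\<in>W. right R' \<le> left R \<longrightarrow> R' \<in> S"
      using prefix W by blast
    ultimately show ?thesis
      unfolding H_def using sum_val_hits_ray_row[OF assms(1) row[OF W]] by blast
  qed
  moreover have "{W\<in>{W\<in>Ws. W \<inter> S \<noteq> {}}. t < prefix_end W S \<and> ypos (leftmost W) \<le> s}
      = {W\<in>Ws. W \<inter> S \<noteq> {} \<and> t < prefix_end W S \<and> ypos (leftmost W) \<le> s}"
    by blast
  ultimately show ?thesis
    using assms(3) by (simp add: dominance_sum_def sum.inter_filter)
qed

lemma class_of_mem_cover: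
  assumes "rcp_instance I" "Ws \<subseteq> rows I" "0 < eps" "W \<in> Ws"
    and "{(c', p'). row_class eps Ws c' p' \<noteq> {}} \<subseteq> G"
  shows "class_of eps W \<in> G"
proof -
  have "W \<in> row_class eps Ws (fst (class_of eps W)) (snd (class_of eps W))"
    using assms(4) by (simp add: row_class_iff[OF assms(1-3)])
  then show ?thesis
    using assms(5) by (cases "class_of eps W") auto
qed

lemma val_leftmost_le_class_of:
  assumes "rcp_instance I" "W \<in> rows I" "0 < eps" "eps \<le> 1"
  shows "real (val (leftmost W)) \<le> 2 * (1 + eps) powr real_of_int (snd (class_of eps W))"
proof -
  have "0 < real (val (leftmost W))"
    using rcp_instance_rect(2)[OF assms(1)] leftmost_least(1)[OF assms(1,2)] rows_subset_nonempty(1)[OF assms(2)] by auto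
  then show ?thesis
    using le_two_powr_floor_log[OF assms(3,4)] by (simp add: class_of_def)
qed

lemma class_error_le_row_class_sum:
  assumes I: "rcp_instance I" "Ws \<subseteq> rows I" and "0 < eps" "0 \<le> \<delta>"
    and G: "finite G" "{(c', p'). row_class eps Ws c' p' \<noteq> {}} \<subseteq> G"
    and prefix: "\<forall>W\<in>Ws. \<forall>R\<in>S \<inter> W. \<forall>R'\<in>W. right R' \<le> left R \<longrightarrow> R' \<in> S"
    and reach: "\<forall>W\<in>Ws. \<exists>R\<in>W. left R \<le> t"
  shows "(\<Sum>g\<in>class_of eps ` {W\<in>Ws. W \<inter> S \<noteq> {} \<and> t < prefix_end W S \<and> ypos (leftmost W) \<le> s}.
            (1 + eps) powr real_of_int (snd g)
            * of_int \<lfloor>\<delta> * real (card {W\<in>Ws. W \<inter> S \<noteq> {} \<and> class_of eps W = g})\<rfloor>)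
         \<le> (\<Sum>(c', p')\<in>{(c', p'). \<exists>W\<in>row_class eps Ws c' p'. \<exists>R\<in>W. hits_ray R s t}.
              (1 + eps) powr real_of_int p'
              * of_int \<lfloor>\<delta> * real (card {W \<in> row_class eps Ws c' p'. W \<inter> S \<noteq> {}})\<rfloor>)"
    (is "(\<Sum>g\<in>class_of eps ` ?H. ?err g) \<le> sum ?F ?Hit")
proof -
  note row_class = row_class_iff[OF I \<open>0 < eps\<close>]
  have "{W\<in>Ws. W \<inter> S \<noteq> {} \<and> class_of eps W = (c, p)} = {W \<in> row_class eps Ws c p. W \<inter> S \<noteq> {}}" for c p
    by (auto simp: row_class)
  then have "?err g = ?F g" for g
    by (cases g) simp
  then have "(\<Sum>g\<in>class_of eps ` ?H. ?err g) = (\<Sum>g\<in>class_of eps ` ?H. ?F g)"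
    by simp
  also have "\<dots> \<le> sum ?F ?Hit"
  proof (rule sum_mono2)
    show "finite ?Hit"
      by (rule finite_subset[OF _ G(1)]) (use G(2) in blast)
    show "class_of eps ` ?H \<subseteq> ?Hit"
    proof
      fix g
      assume "g \<in> class_of eps ` ?H"
      then obtain W where W: "W \<in> ?H" "class_of eps W = (fst g, snd g)"
        by force
      obtain R0 where "R0 \<in> W" "left R0 \<le> t"
        using reach W(1) by blast
      then have "\<exists>R\<in>W \<inter> S. hits_ray R s t"
        using prefix_hits_ray_iff[of I W S, OF I(1)] I(2) prefix W(1) by blast
      moreover have "W \<in> row_class eps Ws (fst g) (snd g)"
        using W by (simp add: row_class)
      ultimately have "(fst g, snd g) \<in> ?Hit"
        unfolding mem_Collect_eq prod.case by blast
      then show "g \<in> ?Hit"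
        by simp
    qed
    show "0 \<le> ?F g" for g
      using \<open>0 \<le> \<delta>\<close> by (cases g) simp
  qed
  finally show ?thesis .
qed

lemma rcp_ray_sum_step_approximation:
  fixes eps K :: real and T a b :: nat and I S :: "rect set" and Ws :: "rect set set"
    and G :: "(real \<times> int) set"
  assumes eps: "0 < eps" "eps < 1" and "K \<ge> 1" "T \<ge> 2" "a < b"
    and I: "rcp_instance I" "Ws \<subseteq> rows I" "finite Ws"
    and span: "\<forall>W\<in>Ws. \<exists>R\<in>W. \<exists>R'\<in>W. left R \<le> a \<and> b \<le> right R'"
    and G: "finite G" "{(c', p'). row_class eps Ws c' p' \<noteq> {}} \<subseteq> G"
    and S: "S \<subseteq> \<Union>Ws" "\<forall>W\<in>Ws. \<forall>R\<in>S \<inter> W. \<forall>R'\<in>W. right R' \<le> left R \<longrightarrow> R' \<in> S"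
  shows "\<exists>(f::nat \<times> nat \<Rightarrow> nat) k.
            step_function_on a b f k
          \<and> real k \<le> 81 * max 1 ((K * real (card G) * log 2 (real T) / eps) ^ 2)
          \<and> (\<forall>t s. a \<le> t \<and> t < b \<longrightarrow>
               f (t, s) \<le> (\<Sum>R\<in>\<Union>Ws. val R)
             \<and> f (t, s) \<le> (\<Sum>R\<in>{R\<in>S. hits_ray R s t}. val R)
             \<and> real (\<Sum>R\<in>{R\<in>S. hits_ray R s t}. val R)
                 \<le> real (f (t, s))
                   + (\<Sum>(c', p')\<in>{(c', p'). \<exists>W\<in>row_class eps Ws c' p'. \<exists>R\<in>W. hits_ray R s t}.
                        (1 + eps) powr (real_of_int p')
                        * of_int \<lfloor>eps / (2 * K * log 2 (real T))
                             * real (card {W \<in> row_class eps Ws c' p'. W \<inter> S \<noteq> {}})\<rfloor>))"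
    (is "\<exists>f k. _ \<and> real k \<le> 81 * max 1 (?\<Gamma>\<^sup>2) \<and> (\<forall>t s. _ \<longrightarrow> ?bounds f t s)")
proof -
  define \<delta> where "\<delta> = eps / (2 * K * log 2 (real T))"
  define A where "A = {W\<in>Ws. W \<inter> S \<noteq> {}}"
  define cls where "cls = class_of eps"
  define w where "w = (\<lambda>W. val (leftmost W))"
  define x where "x = (\<lambda>W. prefix_end W S)"
  define y where "y = (\<lambda>W. ypos (leftmost W))"
  define L where "L g = (1 + eps) powr real_of_int (snd g)" for g :: "real \<times> int"
  have "1 \<le> log 2 (real T)"
    using \<open>T \<ge> 2\<close> by simp
  then have "0 < \<delta>" "0 \<le> ?\<Gamma>" and card_G: "real (card G) * (4 / \<delta>) = 8 * ?\<Gamma>"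
    using eps \<open>K \<ge> 1\<close> by (simp_all add: \<delta>_def field_simps)
  have "finite A" "cls ` A \<subseteq> G"
    using I(3) class_of_mem_cover[OF I(1,2) eps(1) _ G(2)] by (auto simp: A_def cls_def)
  have weight: "real (w W) \<le> 2 * L (cls W)" if "W \<in> A" for W
    using val_leftmost_le_class_of[OF I(1) _ eps(1)] eps that I(2) by (auto simp: A_def w_def L_def cls_def)
  obtain f k where "step_function_on a b f k" and k: "real k \<le> (1 + real (card G) * (4 / \<delta>))\<^sup>2"
    and approx: "\<And>t s. a \<le> t \<and> t < b \<Longrightarrow> f (t, s) \<le> dominance_sum A w x y t s
          \<and> real (dominance_sum A w x y t s) \<le> real (f (t, s))
             + (\<Sum>g\<in>cls ` {i\<in>A. t < x i \<and> y i \<le> s}. L g * of_int \<lfloor>\<delta> * real (card {i\<in>A. cls i = g})\<rfloor>)"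
    using dominance_sum_rounded_step_approximation[where w = w and cls = cls and L = L and x = x and y = y,
        OF \<open>finite A\<close> \<open>a < b\<close> G(1) \<open>cls ` A \<subseteq> G\<close> \<open>0 < \<delta>\<close> weight] by blast
  have "real k \<le> 81 * max 1 (?\<Gamma>\<^sup>2)"
    using k one_plus_eight_mult_sq_le[OF \<open>0 \<le> ?\<Gamma>\<close>] unfolding card_G by (rule order_trans)
  moreover have "?bounds f t s" if t: "a \<le> t \<and> t < b" for t s
  proof -
    have reach: "\<forall>W\<in>Ws. \<exists>R\<in>W. left R \<le> t"
      using span t by (meson le_trans)
    have ray: "(\<Sum>R\<in>{R\<in>S. hits_ray R s t}. val R) = dominance_sum A w x y t s"
      unfolding A_def w_def x_def y_def by (rule ray_sum_eq_dominance_sum[OF I S reach])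
    have "finite (\<Union>Ws)"
      using I(3) rcp_row_finite[OF I(1)] I(2) by blast
    then have total: "(\<Sum>R\<in>{R\<in>S. hits_ray R s t}. val R) \<le> (\<Sum>R\<in>\<Union>Ws. val R)"
      using S(1) by (intro sum_mono2) auto
    show ?thesis
      using approx[OF t, of s] ray total class_error_le_row_class_sum[OF I(1,2) eps(1) _ G S(2) reach, of \<delta> s]
        \<open>0 < \<delta>\<close>
      by (simp add: A_def cls_def x_def y_def L_def \<delta>_def conj_assoc)
  qed
  ultimately show ?thesis
    using \<open>step_function_on a b f k\<close> by blast
qed

theorem lemma19:
  "\<exists>C>0. \<forall>(eps::real) (K::real) (T::nat) (a::nat) (b::nat) (I::rect set)
      (Ws::rect set set) (G::(real \<times> int) set) (S::rect set).
     0 < eps \<and> eps < 1 \<and> K \<ge> 1 \<and> T \<ge> 2 \<and> a < b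
     \<and> rcp_instance I \<and> Ws \<subseteq> rows I \<and> finite Ws
     \<and> (\<forall>W\<in>Ws. \<exists>R\<in>W. \<exists>R'\<in>W. left R \<le> a \<and> b \<le> right R')
     \<and> finite G \<and> {(c', p'). row_class eps Ws c' p' \<noteq> {}} \<subseteq> G
     \<and> S \<subseteq> \<Union>Ws
     \<and> (\<forall>W\<in>Ws. \<forall>R\<in>S \<inter> W. \<forall>R'\<in>W. right R' \<le> left R \<longrightarrow> R' \<in> S)
     \<longrightarrow> (\<exists>(f::nat \<times> nat \<Rightarrow> nat) k.
            step_function_on a b f k
          \<and> real k \<le> C * max 1 ((K * real (card G) * log 2 (real T) / eps) ^ 2)
          \<and> (\<forall>t s. a \<le> t \<and> t < b \<longrightarrow>
               f (t, s) \<le> (\<Sum>R\<in>\<Union>Ws. val R)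
             \<and> f (t, s) \<le> (\<Sum>R\<in>{R\<in>S. hits_ray R s t}. val R)
             \<and> real (\<Sum>R\<in>{R\<in>S. hits_ray R s t}. val R)
                 \<le> real (f (t, s))
                   + (\<Sum>(c', p')\<in>{(c', p'). \<exists>W\<in>row_class eps Ws c' p'. \<exists>R\<in>W. hits_ray R s t}.
                        (1 + eps) powr (real_of_int p')
                        * of_int \<lfloor>eps / (2 * K * log 2 (real T))
                             * real (card {W \<in> row_class eps Ws c' p'. W \<inter> S \<noteq> {}})\<rfloor>)))"
  by (intro exI[of _ "81::real"] conjI allI impI zero_less_numeral, elim conjE)
    (rule rcp_ray_sum_step_approximation)

end
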